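(* Let $r\ge 2$ and $n=3(r-1)$. Then there exist an $n$-partite quantum state, two two-outcome measurements for each party, and a linear output-input post-selection (functions $g_j(\mathbf{x},\mathbf{m}^{\setminus j})$) such that the post-selected correlator satisfies $p(1|\mathbf{x})=\delta^1_{f(\mathbf{x})}$ for all $\mathbf{x}\in\{0,1\}^r$, where $f(\mathbf{x})=\prod_{k=1}^r x_k$; i.e. this vertex of $\mathcal{P}_{\mathbf{x}}$ belongs to $\mathcal{Q}^n_{\mathbf{x},\mathbf{m}}$.
   Context: $(n,2,2)$ quantum Bell scenario: parties share a state $\rho$ on $\mathcal{H}_1\otimes\cdots\otimes\mathcal{H}_n$; party $j$ gets input $s_j\in\{0,1\}$, chosen uniformly and independently of everything else, performs a two-outcome POVM depending on $s_j$ and outputs $m_j\in\{0,1\}$, with $p(\mathbf{m}|\mathbf{s})=\mathrm{Tr}[\rho\bigotimes_j E^{(j)}_{m_j|s_j}]$. An experimenter holds $\mathbf{x}\in\{0,1\}^r$. Linear output-input post-selection: fix, for each $j$, a linear Boolean function $g_j$ (of the form $\bigoplus a_k y_k\oplus b$) of the bits of $\mathbf{x}$ and of $\mathbf{m}^{\setminus j}=(m_i)_{i\ne j}$; the post-selected correlator is $p(1|\mathbf{x})=\Pr[\bigoplus_j m_j=1\mid s_j=g_j(\mathbf{x},\mathbf{m}^{\setminus j})\ \forall j]$. $\mathcal{P}_{\mathbf{x}}$ is the convex hull of vectors $(\delta^1_{F(\mathbf{x})})_{\mathbf{x}}$ over all Boolean $F$, and $\mathcal{Q}^n_{\mathbf{x},\mathbf{m}}$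 is the set of post-selected quantum correlator vectors obtainable with $n$ parties and such post-selections. *)

theory Defs
  imports "Jordan_Normal_Form.Matrix" "Jordan_Normal_Form.Conjugate"
begin

definition mtrace :: "complex mat \<Rightarrow> complex" where
  "mtrace A = (\<Sum>i<dim_row A. A $$ (i, i))"

definition psd :: "nat \<Rightarrow> complex mat \<Rightarrow> bool" where
  "psd d A \<longleftrightarrow> A \<in> carrier_mat d d
     \<and> (\<forall>i<d. \<forall>j<d. A $$ (i, j) = cnj (A $$ (j, i)))
     \<and> (\<forall>v \<in> carrier_vec d. Im (conjugate v \<bullet> (A *\<^sub>v v)) = 0
                              \<and> Re (conjugate v \<bullet> (A *\<^sub>v v)) \<ge> 0)"

definition density :: "nat \<Rightarrow> complex mat \<Rightarrow> bool" where
  "density d \<rho> \<longleftrightarrow> psd d \<rho> \<and> mtrace \<rho> = 1"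

definition povm2 :: "nat \<Rightarrow> (bool \<Rightarrow> complex mat) \<Rightarrow> bool" where
  "povm2 d E \<longleftrightarrow> psd d (E False) \<and> psd d (E True) \<and> E False + E True = 1\<^sub>m d"

definition kron :: "complex mat \<Rightarrow> complex mat \<Rightarrow> complex mat" where
  "kron A B = mat (dim_row A * dim_row B) (dim_col A * dim_col B)
     (\<lambda>(i, j). A $$ (i div dim_row B, j div dim_col B) * B $$ (i mod dim_row B, j mod dim_col B))"

(* Tensor product of a list of matrices (first factor = first party) *)
fun kron_list :: "complex mat list \<Rightarrow> complex mat" where
  "kron_list [] = 1\<^sub>m 1"
| "kron_list (A # As) = kron A (kron_list As)"

(* Bits are booleans: True = 1, False = 0.  Parity (XOR) of P over a finite set. *)
definition xor_over :: "nat set \<Rightarrow> (nat \<Rightarrow> bool) \<Rightarrow> bool" where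
  "xor_over A P = odd (card {i \<in> A. P i})"

definition lin_g :: "nat \<Rightarrow> nat \<Rightarrow> nat \<Rightarrow> (nat \<Rightarrow> bool) \<Rightarrow> (nat \<Rightarrow> bool) \<Rightarrow> bool
                      \<Rightarrow> bool list \<Rightarrow> bool list \<Rightarrow> bool" where
  "lin_g r n j a c b x m =
     ((xor_over {..<r} (\<lambda>k. a k \<and> x ! k) \<noteq> xor_over ({..<n} - {j}) (\<lambda>i. c i \<and> m ! i)) \<noteq> b)"

(* Born rule: p(m|s) = Tr[\<rho> \<otimes>_j E_j(m_j|s_j)];  E j s m is E^{(j)}_{m|s} *)
definition qprob :: "nat \<Rightarrow> complex mat \<Rightarrow> (nat \<Rightarrow> bool \<Rightarrow> bool \<Rightarrow> complex mat)
                      \<Rightarrow> bool list \<Rightarrow> bool list \<Rightarrow> real" where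
  "qprob n \<rho> E m s = Re (mtrace (\<rho> * kron_list (map (\<lambda>j. E j (s ! j) (m ! j)) [0..<n])))"

definition bitstrings :: "nat \<Rightarrow> bool list set" where
  "bitstrings n = {m. length m = n}"

(* Probability (w.r.t. uniform independent inputs s) of the post-selection event
   s_j = g_j(x, m^{\<setminus>j}) for all j, together with an extra event on m *)
definition postsel_prob :: "nat \<Rightarrow> complex mat \<Rightarrow> (nat \<Rightarrow> bool \<Rightarrow> bool \<Rightarrow> complex mat)
    \<Rightarrow> (nat \<Rightarrow> bool list \<Rightarrow> bool list \<Rightarrow> bool) \<Rightarrow> bool list \<Rightarrow> (bool list \<Rightarrow> bool) \<Rightarrow> real" where
  "postsel_prob n \<rho> E g x Q =
     (\<Sum>s\<in>bitstrings n. \<Sum>m\<in>bitstrings n.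
        (if Q m \<and> (\<forall>j<n. s ! j = g j x m) then qprob n \<rho> E m s / 2 ^ n else 0))"

definition postsel_corr :: "nat \<Rightarrow> complex mat \<Rightarrow> (nat \<Rightarrow> bool \<Rightarrow> bool \<Rightarrow> complex mat)
    \<Rightarrow> (nat \<Rightarrow> bool list \<Rightarrow> bool list \<Rightarrow> bool) \<Rightarrow> bool list \<Rightarrow> real" where
  "postsel_corr n \<rho> E g x =
     postsel_prob n \<rho> E g x (\<lambda>m. xor_over {..<n} (\<lambda>i. m ! i))
     / postsel_prob n \<rho> E g x (\<lambda>m. True)"

end

theory Submission
  imports Defs
begin

(*
  The construction is a local deterministic model, which post-selection turns into an AND gate.
  The parties come in blocks 3i, 3i+1, 3i+2 (i < r - 1); parties 3i and 3i+1 share a uniformly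
  random hidden bit l, and the three answer an input s with l \<and> s, l \<noteq> s and s respectively.  Post-selection feeds
  party 3i with the parity A of all earlier outputs (with x_0 for i = 0), and closes a loop between
  parties 3i+1 and 3i+2: s_{3i+2} = m_{3i+1} and s_{3i+1} = y_i \<noteq> m_{3i+2}, where y_0 = x_1 and
  y_i = \<not> x_{i+1}.  The loop is consistent only if l = y_i, and then the block contributes
  m_{3i} = y_i \<and> A to the parity, so the parity after block i is x_0 \<and> \<dots> \<and> x_{i+1}.
*)

definition diag_mat_of :: "nat \<Rightarrow> (nat \<Rightarrow> complex) \<Rightarrow> complex mat" where
  "diag_mat_of N f = mat N N (\<lambda>(i, j). if i = j then f i else 0)"

lemma diag_mat_of_carrier [simp]: "diag_mat_of N f \<in> carrier_mat N N"
  by (simp add: diag_mat_of_def)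

lemma dim_diag_mat_of [simp]: "dim_row (diag_mat_of N f) = N" "dim_col (diag_mat_of N f) = N"
  by (simp_all add: diag_mat_of_def)

lemma sum_delta_times: "i < N \<Longrightarrow> (\<Sum>k<N. (if i = k then a else 0) * g k) = a * g i"
  for a :: "'a :: semiring_0" and N :: nat
  by (simp add: if_distrib[of "\<lambda>t. t * _"] cong: if_cong)

lemma diag_mat_of_mult_vec_index:
  "v \<in> carrier_vec N \<Longrightarrow> i < N \<Longrightarrow> (diag_mat_of N f *\<^sub>v v) $ i = f i * v $ i"
  by (simp add: diag_mat_of_def mult_mat_vec_def scalar_prod_def row_def atLeast0LessThan
      sum_delta_times)

lemma index_diag_mat_of_mult:
  "K \<in> carrier_mat N N \<Longrightarrow> i < N \<Longrightarrow> (diag_mat_of N f * K) $$ (i, i) = f i * K $$ (i, i)"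
  by (simp add: diag_mat_of_def times_mat_def scalar_prod_def row_def col_def atLeast0LessThan
      sum_delta_times)

lemma mtrace_diag_mat_of_mult:
  "K \<in> carrier_mat N N \<Longrightarrow> mtrace (diag_mat_of N f * K) = (\<Sum>i<N. f i * K $$ (i, i))"
  by (simp add: mtrace_def index_diag_mat_of_mult del: index_mult_mat(1))

lemma quadratic_form_diag_mat_of:
  assumes v: "v \<in> carrier_vec N" and f: "\<And>i. i < N \<Longrightarrow> f i = of_real (p i)"
  shows "conjugate v \<bullet> (diag_mat_of N f *\<^sub>v v) = of_real (\<Sum>i<N. p i * (cmod (v $ i))\<^sup>2)"
proof -
  have "conjugate v $ i * (diag_mat_of N f *\<^sub>v v) $ i = of_real (p i * (cmod (v $ i))\<^sup>2)"
    if "i < N" for i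
    using that v f[OF that] diag_mat_of_mult_vec_index[OF v that]
    by (simp add: complex_norm_square[unfolded of_real_power] mult.commute)
  then show ?thesis
    using v by (simp add: scalar_prod_def atLeast0LessThan)
qed

lemma psd_diag_mat_of:
  assumes "\<And>i. i < N \<Longrightarrow> f i = of_real (p i)" and "\<And>i. i < N \<Longrightarrow> 0 \<le> p i"
  shows "psd N (diag_mat_of N f)"
  unfolding psd_def
proof (intro conjI ballI allI impI)
  fix v :: "complex vec" assume v: "v \<in> carrier_vec N"
  show "Im (conjugate v \<bullet> (diag_mat_of N f *\<^sub>v v)) = 0"
    and "Re (conjugate v \<bullet> (diag_mat_of N f *\<^sub>v v)) \<ge> 0"
    using assms(2) by (simp_all add: quadratic_form_diag_mat_of[OF v assms(1)] del: of_real_sum)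
      (auto intro!: sum_nonneg)
qed (use assms in \<open>auto simp: diag_mat_of_def\<close>)

fun bits :: "nat \<Rightarrow> nat \<Rightarrow> bool list" where
  "bits 0 i = []"
| "bits (Suc n) i = (2 ^ n \<le> i) # bits n (i mod 2 ^ n)"

lemma finite_bitstrings [simp]: "finite (bitstrings n)"
  using finite_lists_length_eq[of "UNIV :: bool set" n] by (simp add: bitstrings_def)

lemma sum_bitstrings_Suc:
  "(\<Sum>l\<in>bitstrings (Suc n). f l) = (\<Sum>l\<in>bitstrings n. f (False # l) + f (True # l))"
proof -
  have "bitstrings (Suc n) = Cons False ` bitstrings n \<union> Cons True ` bitstrings n"
    by (auto simp: bitstrings_def length_Suc_conv image_iff)
  then show ?thesis
    by (simp only:) (subst sum.union_disjoint; auto simp: sum.reindex sum.distrib)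
qed

lemma sum_bits: "(\<Sum>i<2 ^ n. f (bits n i)) = (\<Sum>l\<in>bitstrings n. f l)"
proof (induction n arbitrary: f)
  case 0
  then show ?case by (simp add: bitstrings_def)
next
  case (Suc n)
  have "(\<Sum>i<2 ^ Suc n. f (bits (Suc n) i))
      = (\<Sum>i<2 ^ n. f (bits (Suc n) i)) + (\<Sum>i<2 ^ n. f (bits (Suc n) (2 ^ n + i)))"
    by (simp add: mult_2 sum.atLeastLessThan_concat[of 0 "2 ^ n" "2 ^ n + 2 ^ n", symmetric]
        atLeast0LessThan[symmetric] sum.shift_bounds_nat_ivl[of _ 0 "2 ^ n", simplified]
        add.commute)
  also have "\<dots> = (\<Sum>i<2 ^ n. f (False # bits n i)) + (\<Sum>i<2 ^ n. f (True # bits n i))"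
    by simp
  finally show ?case
    using Suc.IH[of "\<lambda>l. f (False # l)"] Suc.IH[of "\<lambda>l. f (True # l)"]
    by (simp add: sum_bitstrings_Suc sum.distrib)
qed

lemma kron_list_carrier:
  "(\<And>A. A \<in> set As \<Longrightarrow> A \<in> carrier_mat 2 2)
    \<Longrightarrow> kron_list As \<in> carrier_mat (2 ^ length As) (2 ^ length As)"
proof (induction As)
  case (Cons A As)
  then have "dim_row A = 2" "dim_col A = 2"
    by auto
  with Cons show ?case
    by (simp add: kron_def)
qed simp

lemma kron_list_diag:
  assumes "\<And>A. A \<in> set As \<Longrightarrow> A \<in> carrier_mat 2 2" and "i < 2 ^ length As"
  shows "kron_list As $$ (i, i)
    = (\<Prod>j<length As. (As ! j) $$ (of_bool (bits (length As) i ! j), of_bool (bits (length As) i ! j)))"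
  using assms
proof (induction As arbitrary: i)
  case Nil
  then show ?case by simp
next
  case (Cons A As)
  let ?k = "length As"
  have A: "A \<in> carrier_mat 2 2" and As: "kron_list As \<in> carrier_mat (2 ^ ?k) (2 ^ ?k)"
    using Cons.prems(1) kron_list_carrier[of As] by auto
  have i: "i < 2 * 2 ^ ?k"
    using Cons.prems(2) by simp
  have "i div 2 ^ ?k = of_bool (2 ^ ?k \<le> i)"
    using i by (auto simp: div_eq_0_iff le_div_geq intro: div_nat_eqI)
  then have "kron_list (A # As) $$ (i, i)
      = A $$ (of_bool (2 ^ ?k \<le> i), of_bool (2 ^ ?k \<le> i)) * kron_list As $$ (i mod 2 ^ ?k, i mod 2 ^ ?k)"
    using A As i by (simp add: kron_def)
  then show ?case
    using Cons.IH[of "i mod 2 ^ ?k"] Cons.prems(1)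
    by (simp del: prod.lessThan_Suc add: prod.lessThan_Suc_shift)
qed

lemma prod_of_bool: "finite A \<Longrightarrow> (\<Prod>x\<in>A. of_bool (P x)) = (of_bool (\<forall>x\<in>A. P x) :: 'a :: comm_semiring_1)"
  by (induction A rule: finite_induct) auto

text \<open>A local deterministic model: the parties share hidden bits \<open>l\<close> with joint distribution \<open>p\<close>,
  and party \<open>j\<close> answers input \<open>s\<close> with \<open>R j (l ! j) s\<close>.  It is realised by a diagonal state
  whose basis index encodes \<open>l\<close> in binary, and by diagonal POVMs.\<close>

definition hidden_state :: "nat \<Rightarrow> (bool list \<Rightarrow> real) \<Rightarrow> complex mat" where
  "hidden_state n p = diag_mat_of (2 ^ n) (\<lambda>i. of_real (p (bits n i)))"

definition response_povm :: "(bool \<Rightarrow> bool \<Rightarrow> bool) \<Rightarrow> bool \<Rightarrow> bool \<Rightarrow> complex mat" where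
  "response_povm R s m = diag_mat_of 2 (\<lambda>i. of_bool (m = R (i \<noteq> 0) s))"

lemma density_hidden_state:
  assumes "\<And>l. 0 \<le> p l" and "(\<Sum>l\<in>bitstrings n. p l) = 1"
  shows "density (2 ^ n) (hidden_state n p)"
proof -
  have "mtrace (hidden_state n p) = of_real (\<Sum>l\<in>bitstrings n. p l)"
    by (simp add: mtrace_def hidden_state_def diag_mat_of_def sum_bits[of "\<lambda>l. of_real (p l)"])
  then show ?thesis
    using assms unfolding density_def hidden_state_def by (auto intro: psd_diag_mat_of)
qed

lemma povm2_response_povm: "povm2 2 (response_povm R s)"
proof -
  have "response_povm R s False + response_povm R s True = 1\<^sub>m 2"
    by (rule eq_matI) (auto simp: response_povm_def diag_mat_of_def)
  moreover have "psd 2 (response_povm R s m)" for m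
    unfolding response_povm_def
    by (rule psd_diag_mat_of[where p = "\<lambda>i. of_bool (m = R (i \<noteq> 0) s)"]) auto
  ultimately show ?thesis
    by (simp add: povm2_def)
qed

lemma qprob_hidden_state:
  "qprob n (hidden_state n p) (\<lambda>j. response_povm (R j)) m s
    = (\<Sum>l\<in>bitstrings n. if \<forall>j<n. m ! j = R j (l ! j) (s ! j) then p l else 0)"
proof -
  define As where "As = map (\<lambda>j. response_povm (R j) (s ! j) (m ! j)) [0..<n]"
  have As: "\<And>A. A \<in> set As \<Longrightarrow> A \<in> carrier_mat 2 2" "length As = n"
    by (auto simp: As_def response_povm_def)
  have diag: "kron_list As $$ (i, i) = of_bool (\<forall>j<n. m ! j = R j (bits n i ! j) (s ! j))"
    if "i < 2 ^ n" for i
  proof -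
    have "kron_list As $$ (i, i) = (\<Prod>j<n. (As ! j) $$ (of_bool (bits n i ! j), of_bool (bits n i ! j)))"
      using kron_list_diag[of As i] As that by simp
    also have "\<dots> = (\<Prod>j<n. of_bool (m ! j = R j (bits n i ! j) (s ! j)))"
      by (intro prod.cong) (auto simp: As_def response_povm_def diag_mat_of_def)
    finally show ?thesis
      by (auto simp: prod_of_bool)
  qed
  have "mtrace (hidden_state n p * kron_list As)
      = (\<Sum>i<2 ^ n. of_real (if \<forall>j<n. m ! j = R j (bits n i ! j) (s ! j) then p (bits n i) else 0))"
  proof -
    have "kron_list As \<in> carrier_mat (2 ^ n) (2 ^ n)"
      using kron_list_carrier[of As] As by simp
    then show ?thesis
      by (simp add: hidden_state_def mtrace_diag_mat_of_mult diag del: sum_mult_of_bool_eq)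
        (rule sum.cong; simp)
  qed
  then show ?thesis
    by (simp add: qprob_def As_def
        sum_bits[of "\<lambda>l. of_real (if \<forall>j<n. m ! j = R j (l ! j) (s ! j) then p l else 0)"])
qed

lemma postsel_prob_pos:
  assumes nonneg: "\<And>m s. 0 \<le> qprob n \<rho> E m s"
    and m0: "m0 \<in> bitstrings n" and pos: "0 < qprob n \<rho> E m0 (map (\<lambda>j. g j x m0) [0..<n])"
  shows "0 < postsel_prob n \<rho> E g x (\<lambda>m. True)"
  unfolding postsel_prob_def
proof (rule sum_pos2)
  let ?s0 = "map (\<lambda>j. g j x m0) [0..<n]"
  show "?s0 \<in> bitstrings n"
    by (simp add: bitstrings_def)
  show "0 < (\<Sum>m\<in>bitstrings n. if True \<and> (\<forall>j<n. ?s0 ! j = g j x m) then qprob n \<rho> E m ?s0 / 2 ^ n else 0)"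
    by (rule sum_pos2[OF _ m0]) (use pos nonneg in auto)
qed (use nonneg in \<open>auto intro!: sum_nonneg\<close>)

lemma postsel_corr_eq_if:
  assumes den: "postsel_prob n \<rho> E g x (\<lambda>m. True) \<noteq> 0"
    and parity: "\<And>m s. m \<in> bitstrings n \<Longrightarrow> s \<in> bitstrings n \<Longrightarrow> \<forall>j<n. s ! j = g j x m
      \<Longrightarrow> qprob n \<rho> E m s \<noteq> 0 \<Longrightarrow> xor_over {..<n} (\<lambda>i. m ! i) = v"
  shows "postsel_corr n \<rho> E g x = (if v then 1 else 0)"
proof -
  have "postsel_prob n \<rho> E g x (\<lambda>m. xor_over {..<n} (\<lambda>i. m ! i))
      = (if v then postsel_prob n \<rho> E g x (\<lambda>m. True) else 0)"
  proof -
    have "(if xor_over {..<n} (\<lambda>i. m ! i) \<and> (\<forall>j<n. s ! j = g j x m) then qprob n \<rho> E m s / 2 ^ n else 0)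
        = (if v then (if True \<and> (\<forall>j<n. s ! j = g j x m) then qprob n \<rho> E m s / 2 ^ n else 0) else 0)"
      if "s \<in> bitstrings n" "m \<in> bitstrings n" for s m
      using parity[OF that(2,1)] by (cases "qprob n \<rho> E m s = 0") auto
    then show ?thesis
      unfolding postsel_prob_def by (cases v) (simp_all cong: sum.cong)
  qed
  then show ?thesis
    using den by (simp add: postsel_corr_def)
qed

lemma postsel_hidden_state:
  assumes nonneg: "\<And>l. 0 \<le> p l"
    and parity: "\<And>m l. m \<in> bitstrings n \<Longrightarrow> l \<in> bitstrings n \<Longrightarrow> p l \<noteq> 0
      \<Longrightarrow> \<forall>j<n. m ! j = R j (l ! j) (g j x m) \<Longrightarrow> xor_over {..<n} (\<lambda>i. m ! i) = v"
    and witness: "m0 \<in> bitstrings n" "l0 \<in> bitstrings n" "0 < p l0"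
      "\<forall>j<n. m0 ! j = R j (l0 ! j) (g j x m0)"
  shows "0 < postsel_prob n (hidden_state n p) (\<lambda>j. response_povm (R j)) g x (\<lambda>m. True)"
    and "postsel_corr n (hidden_state n p) (\<lambda>j. response_povm (R j)) g x = (if v then 1 else 0)"
proof -
  have qprob_nonneg: "0 \<le> qprob n (hidden_state n p) (\<lambda>j. response_povm (R j)) m s" for m s
    unfolding qprob_hidden_state by (intro sum_nonneg) (simp add: nonneg)
  have "0 < qprob n (hidden_state n p) (\<lambda>j. response_povm (R j)) m0 (map (\<lambda>j. g j x m0) [0..<n])"
    unfolding qprob_hidden_state
    by (rule sum_pos2[OF _ witness(2)]) (simp_all add: witness(3,4) nonneg)
  then show den: "0 < postsel_prob n (hidden_state n p) (\<lambda>j. response_povm (R j)) g x (\<lambda>m. True)"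
    by (rule postsel_prob_pos[OF qprob_nonneg witness(1)])
  show "postsel_corr n (hidden_state n p) (\<lambda>j. response_povm (R j)) g x = (if v then 1 else 0)"
  proof (rule postsel_corr_eq_if)
    fix m s
    assume m: "m \<in> bitstrings n" and s: "\<forall>j<n. s ! j = g j x m"
      and "qprob n (hidden_state n p) (\<lambda>j. response_povm (R j)) m s \<noteq> 0"
    then obtain l where "l \<in> bitstrings n" "p l \<noteq> 0" "\<forall>j<n. m ! j = R j (l ! j) (s ! j)"
      unfolding qprob_hidden_state by (auto elim: sum.not_neutral_contains_not_neutral split: if_splits)
    then show "xor_over {..<n} (\<lambda>i. m ! i) = v"
      using parity[OF m] s by simp
  qed (use den in simp)
qed

lemma xor_over_lessThan_Suc: "xor_over {..<Suc k} P = (xor_over {..<k} P \<noteq> P k)"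
proof -
  have "{i \<in> {..<Suc k}. P i} = (if P k then insert k {i \<in> {..<k}. P i} else {i \<in> {..<k}. P i})"
    by (auto simp: less_Suc_eq)
  then show ?thesis
    by (simp add: xor_over_def)
qed

lemma xor_over_empty [simp]: "xor_over {} P = False"
  by (simp add: xor_over_def)

lemma xor_over_False [simp]: "xor_over A (\<lambda>_. False) = False"
  by (simp add: xor_over_def)

lemma xor_over_singleton: "k \<in> A \<Longrightarrow> xor_over A (\<lambda>i. i = k \<and> P i) = P k"
  by (cases "P k") (simp_all add: xor_over_def conj_commute Collect_conv_if)

lemma xor_over_prefix: "j \<le> n \<Longrightarrow> xor_over ({..<n} - {j}) (\<lambda>i. i < j \<and> P i) = xor_over {..<j} P"
  unfolding xor_over_def by (rule arg_cong[where f = "\<lambda>A. odd (card A)"]) auto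

lemma mod_div_3_simps [simp]:
  "(3 * i) mod 3 = 0" "Suc (3 * i) mod 3 = 1" "Suc (Suc (3 * i)) mod 3 = 2"
  "(3 * i) div 3 = i" "Suc (3 * i) div 3 = i" "Suc (Suc (3 * i)) div 3 = i"
  by presburger+

definition and_response :: "nat \<Rightarrow> bool \<Rightarrow> bool \<Rightarrow> bool" where
  "and_response j l s = (if j mod 3 = 0 then l \<and> s else if j mod 3 = 1 then l \<noteq> s else s)"

definition and_x_coeff :: "nat \<Rightarrow> nat \<Rightarrow> bool" where
  "and_x_coeff j k =
     (if j mod 3 = 0 then j = 0 \<and> k = 0 else if j mod 3 = 1 then k = j div 3 + 1 else False)"

definition and_m_coeff :: "nat \<Rightarrow> nat \<Rightarrow> bool" where
  "and_m_coeff j i = (if j mod 3 = 0 then i < j else if j mod 3 = 1 then i = j + 1 else i = j - 1)"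

definition and_flip :: "nat \<Rightarrow> bool" where
  "and_flip j \<longleftrightarrow> j mod 3 = 1 \<and> j div 3 \<noteq> 0"

definition and_postsel :: "nat \<Rightarrow> nat \<Rightarrow> bool list \<Rightarrow> bool list \<Rightarrow> bool" where
  "and_postsel r j = lin_g r (3 * (r - 1)) j (and_x_coeff j) (and_m_coeff j) (and_flip j)"

definition and_block_bit :: "bool list \<Rightarrow> nat \<Rightarrow> bool" where
  "and_block_bit x i = (if i = 0 then x ! 1 else \<not> x ! (i + 1))"

lemma and_postsel_offset0:
  assumes "i < r - 1"
  shows "and_postsel r (3 * i) x m = (if i = 0 then x ! 0 else xor_over {..<3 * i} (\<lambda>k. m ! k))"
proof (cases "i = 0")
  case True
  then show ?thesis
    using assms xor_over_singleton[of 0 "{..<r}" "\<lambda>k. x ! k"]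
    by (simp add: and_postsel_def lin_g_def and_x_coeff_def and_m_coeff_def and_flip_def)
next
  case False
  then show ?thesis
    using assms xor_over_prefix[of "3 * i" "3 * (r - 1)" "\<lambda>k. m ! k"]
    by (simp add: and_postsel_def lin_g_def and_x_coeff_def and_m_coeff_def and_flip_def)
qed

lemma and_postsel_offset1:
  assumes "i < r - 1"
  shows "and_postsel r (3 * i + 1) x m = (and_block_bit x i \<noteq> m ! (3 * i + 2))"
  using assms xor_over_singleton[of "i + 1" "{..<r}" "\<lambda>k. x ! k"]
    xor_over_singleton[of "3 * i + 2" "{..<3 * (r - 1)} - {3 * i + 1}" "\<lambda>k. m ! k"]
  by (auto simp: and_postsel_def lin_g_def and_x_coeff_def and_m_coeff_def and_flip_def
      and_block_bit_def)

lemma and_postsel_offset2: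
  assumes "i < r - 1"
  shows "and_postsel r (3 * i + 2) x m = m ! (3 * i + 1)"
  using assms xor_over_singleton[of "3 * i + 1" "{..<3 * (r - 1)} - {3 * i + 2}" "\<lambda>k. m ! k"]
  by (simp add: and_postsel_def lin_g_def and_x_coeff_def and_m_coeff_def and_flip_def)

lemma and_block:
  assumes "i < r - 1"
    and consistent: "\<forall>j\<in>{3 * i, 3 * i + 1, 3 * i + 2}. m ! j = and_response j (l ! j) (and_postsel r j x m)"
    and paired: "l ! (3 * i) = l ! (3 * i + 1)"
  shows "m ! (3 * i + 2) = m ! (3 * i + 1)"
    and "m ! (3 * i) = (and_block_bit x i \<and> (if i = 0 then x ! 0 else xor_over {..<3 * i} (\<lambda>k. m ! k)))"
proof -
  have "m ! (3 * i) = (l ! (3 * i) \<and> (if i = 0 then x ! 0 else xor_over {..<3 * i} (\<lambda>k. m ! k)))"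
    using consistent and_postsel_offset0[OF assms(1)] by (simp add: and_response_def)
  moreover have "m ! (3 * i + 1) = (l ! (3 * i) \<noteq> (and_block_bit x i \<noteq> m ! (3 * i + 2)))"
    using consistent paired and_postsel_offset1[OF assms(1)] by (simp add: and_response_def)
  moreover show "m ! (3 * i + 2) = m ! (3 * i + 1)"
    using consistent and_postsel_offset2[OF assms(1)] by (simp add: and_response_def)
  ultimately show "m ! (3 * i) = (and_block_bit x i \<and> (if i = 0 then x ! 0 else xor_over {..<3 * i} (\<lambda>k. m ! k)))"
    by auto
qed

lemma xor_over_lessThan_3_Suc:
  "xor_over {..<3 * Suc i} P = (((xor_over {..<3 * i} P \<noteq> P (3 * i)) \<noteq> P (3 * i + 1)) \<noteq> P (3 * i + 2))"
proof -
  have "3 * Suc i = Suc (Suc (Suc (3 * i)))"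
    by simp
  then show ?thesis
    by (simp only: xor_over_lessThan_Suc) simp
qed

lemma and_prefix_parity:
  assumes "0 < i" "i \<le> r - 1"
    and consistent: "\<forall>j<3 * i. m ! j = and_response j (l ! j) (and_postsel r j x m)"
    and paired: "\<forall>k<i. l ! (3 * k) = l ! (3 * k + 1)"
  shows "xor_over {..<3 * i} (\<lambda>k. m ! k) = (\<forall>k\<le>i. x ! k)"
  using assms
proof (induction i)
  case 0
  then show ?case by simp
next
  case (Suc i)
  have i: "i < r - 1"
    using Suc.prems by simp
  have block: "m ! (3 * i + 2) = m ! (3 * i + 1)"
    "m ! (3 * i) = (and_block_bit x i \<and> (if i = 0 then x ! 0 else xor_over {..<3 * i} (\<lambda>k. m ! k)))"
    using and_block[OF i, of m l x] Suc.prems by auto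
  have step: "xor_over {..<3 * Suc i} (\<lambda>k. m ! k) = (xor_over {..<3 * i} (\<lambda>k. m ! k) \<noteq> m ! (3 * i))"
    using xor_over_lessThan_3_Suc[of i "\<lambda>k. m ! k"] block(1) by simp blast
  show ?case
  proof (cases "i = 0")
    case True
    then show ?thesis
      using step block(2) by (auto simp: and_block_bit_def le_Suc_eq)
  next
    case False
    then have "xor_over {..<3 * i} (\<lambda>k. m ! k) = (\<forall>k\<le>i. x ! k)"
      using Suc.IH Suc.prems by simp
    then show ?thesis
      using False step block(2) by (auto simp: and_block_bit_def le_Suc_eq)
  qed
qed

definition pair_weight :: "nat \<Rightarrow> bool list \<Rightarrow> real" where
  "pair_weight q l = (\<Prod>i<q. if l ! (3 * i) = l ! (3 * i + 1) then 1 / 4 else 0)"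

lemma pair_weight_nonneg: "0 \<le> pair_weight q l"
  unfolding pair_weight_def by (intro prod_nonneg) auto

lemma pair_weight_pos_iff: "0 < pair_weight q l \<longleftrightarrow> (\<forall>i<q. l ! (3 * i) = l ! (3 * i + 1))"
  unfolding pair_weight_def by (auto simp: prod_pos prod_zero_iff order_less_le)

lemma pair_weight_Cons3:
  "pair_weight (Suc q) (a # b # c # l) = (if a = b then 1 / 4 else 0) * pair_weight q l"
proof -
  have "(a # b # c # l) ! (3 * Suc i) = l ! (3 * i)" "(a # b # c # l) ! (3 * Suc i + 1) = l ! (3 * i + 1)"
    for i
    by (simp_all add: numeral_3_eq_3)
  then show ?thesis
    unfolding pair_weight_def by (simp del: prod.lessThan_Suc add: prod.lessThan_Suc_shift)
qed

lemma sum_pair_weight: "(\<Sum>l\<in>bitstrings (3 * q). pair_weight q l) = 1"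
proof (induction q)
  case 0
  then show ?case by (simp add: pair_weight_def bitstrings_def)
next
  case (Suc q)
  have "3 * Suc q = Suc (Suc (Suc (3 * q)))"
    by simp
  then have "(\<Sum>l\<in>bitstrings (3 * Suc q). pair_weight (Suc q) l) = (\<Sum>l\<in>bitstrings (3 * q). pair_weight q l)"
    by (simp only: sum_bitstrings_Suc sum.distrib[symmetric] pair_weight_Cons3) simp
  then show ?case
    using Suc.IH by simp
qed

lemma and_consistent_exists:
  "\<exists>m l. m \<in> bitstrings (3 * (r - 1)) \<and> l \<in> bitstrings (3 * (r - 1))
     \<and> (\<forall>i<r - 1. l ! (3 * i) = l ! (3 * i + 1))
     \<and> (\<forall>j<3 * (r - 1). m ! j = and_response j (l ! j) (and_postsel r j x m))"
proof -
  define q where "q = r - 1"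
  define l where "l = map (\<lambda>j. j mod 3 \<noteq> 2 \<and> and_block_bit x (j div 3)) [0..<3 * q]"
  define m where "m = map (\<lambda>j. j mod 3 = 0 \<and> and_block_bit x (j div 3) \<and> (\<forall>k\<le>j div 3. x ! k)) [0..<3 * q]"
  have l_block: "l ! (3 * i) = and_block_bit x i" "l ! (3 * i + 1) = and_block_bit x i"
    "l ! (3 * i + 2) = False" if "i < q" for i
    using that by (simp_all add: l_def)
  have m_block: "m ! (3 * i) = (and_block_bit x i \<and> (\<forall>k\<le>i. x ! k))"
    "m ! (3 * i + 1) = False" "m ! (3 * i + 2) = False" if "i < q" for i
    using that by (simp_all add: m_def)
  have paired: "\<forall>i<q. l ! (3 * i) = l ! (3 * i + 1)"
    using l_block by simp
  have "\<forall>j<3 * i. m ! j = and_response j (l ! j) (and_postsel r j x m)" if "i \<le> q" for i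
    using that
  proof (induction i)
    case 0
    then show ?case by simp
  next
    case (Suc i)
    then have i: "i < q" "i < r - 1"
      by (simp_all add: q_def)
    have IH: "\<forall>j<3 * i. m ! j = and_response j (l ! j) (and_postsel r j x m)"
      using Suc by simp
    have prefix: "(if i = 0 then x ! 0 else xor_over {..<3 * i} (\<lambda>k. m ! k)) = (\<forall>k\<le>i. x ! k)"
      using and_prefix_parity[of i r m l x] IH paired i by (auto simp: q_def)
    have block: "m ! j = and_response j (l ! j) (and_postsel r j x m)"
      if "j \<in> {3 * i, 3 * i + 1, 3 * i + 2}" for j
      using that prefix l_block[OF i(1)] m_block[OF i(1)] and_postsel_offset0[OF i(2)]
        and_postsel_offset1[OF i(2)] and_postsel_offset2[OF i(2)]
      by (auto simp: and_response_def)
    show ?case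
    proof (intro allI impI)
      fix j
      assume "j < 3 * Suc i"
      then have "j < 3 * i \<or> j \<in> {3 * i, 3 * i + 1, 3 * i + 2}"
        by auto
      then show "m ! j = and_response j (l ! j) (and_postsel r j x m)"
        using IH block by blast
    qed
  qed
  moreover have "m \<in> bitstrings (3 * q)" "l \<in> bitstrings (3 * q)"
    by (simp_all add: m_def l_def bitstrings_def)
  ultimately show ?thesis
    using paired unfolding q_def by blast
qed

lemma and_postsel_correlator:
  assumes "2 \<le> r"
  defines "n \<equiv> 3 * (r - 1)"
  shows "0 < postsel_prob n (hidden_state n (pair_weight (r - 1))) (\<lambda>j. response_povm (and_response j))
      (and_postsel r) x (\<lambda>m. True)"
    and "postsel_corr n (hidden_state n (pair_weight (r - 1))) (\<lambda>j. response_povm (and_response j))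
      (and_postsel r) x = (if \<forall>k<r. x ! k then 1 else 0)"
proof -
  define q where "q = r - 1"
  have and_all: "(\<forall>k\<le>q. x ! k) = (\<forall>k<r. x ! k)"
    using assms(1) by (auto simp: q_def)
  have parity: "xor_over {..<n} (\<lambda>i. m ! i) = (\<forall>k<r. x ! k)"
    if "pair_weight q l \<noteq> 0" "\<forall>j<n. m ! j = and_response j (l ! j) (and_postsel r j x m)" for m l
  proof -
    have "0 < pair_weight q l"
      using that(1) pair_weight_nonneg[of q l] by simp
    then show ?thesis
      using that(2) and_prefix_parity[of q r m l x] assms(1) and_all
      by (simp add: pair_weight_pos_iff n_def q_def)
  qed
  obtain m0 l0 where witness: "m0 \<in> bitstrings n" "l0 \<in> bitstrings n"
    "\<forall>i<q. l0 ! (3 * i) = l0 ! (3 * i + 1)"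
    "\<forall>j<n. m0 ! j = and_response j (l0 ! j) (and_postsel r j x m0)"
    using and_consistent_exists[of r x] by (auto simp: n_def q_def)
  moreover have "0 < pair_weight q l0"
    using witness(3) by (simp add: pair_weight_pos_iff)
  ultimately show "0 < postsel_prob n (hidden_state n (pair_weight (r - 1)))
      (\<lambda>j. response_povm (and_response j)) (and_postsel r) x (\<lambda>m. True)"
    and "postsel_corr n (hidden_state n (pair_weight (r - 1))) (\<lambda>j. response_povm (and_response j))
      (and_postsel r) x = (if \<forall>k<r. x ! k then 1 else 0)"
    unfolding q_def[symmetric]
    by (intro postsel_hidden_state[where v = "\<forall>k<r. x ! k"]; simp add: parity pair_weight_nonneg)+
qed

theorem lemma4p2p1:
  fixes r :: nat
  assumes "r \<ge> 2"
  defines "n \<equiv> 3 * (r - 1)"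
  shows "\<exists>(d :: nat \<Rightarrow> nat) (\<rho> :: complex mat) (E :: nat \<Rightarrow> bool \<Rightarrow> bool \<Rightarrow> complex mat)
           (a :: nat \<Rightarrow> nat \<Rightarrow> bool) (c :: nat \<Rightarrow> nat \<Rightarrow> bool) (b :: nat \<Rightarrow> bool).
     (\<forall>j<n. d j \<ge> 1)
     \<and> density (\<Prod>j<n. d j) \<rho>
     \<and> (\<forall>j<n. \<forall>s. povm2 (d j) (E j s))
     \<and> (\<forall>x \<in> bitstrings r.
          postsel_prob n \<rho> E (\<lambda>j. lin_g r n j (a j) (c j) (b j)) x (\<lambda>m. True) > 0
        \<and> postsel_corr n \<rho> E (\<lambda>j. lin_g r n j (a j) (c j) (b j)) x
            = (if (\<forall>k<r. x ! k) then 1 else 0))"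
proof -
  have postsel: "(\<lambda>j. lin_g r n j (and_x_coeff j) (and_m_coeff j) (and_flip j)) = and_postsel r"
    by (simp add: fun_eq_iff and_postsel_def n_def)
  have density: "density (\<Prod>j<n. 2) (hidden_state n (pair_weight (r - 1)))"
    using density_hidden_state[of "pair_weight (r - 1)"] pair_weight_nonneg sum_pair_weight
    by (simp add: n_def)
  note correlator = and_postsel_correlator[OF assms(1), folded n_def, unfolded postsel[symmetric]]
  show ?thesis
    by (rule exI[of _ "\<lambda>_. 2"], rule exI[of _ "hidden_state n (pair_weight (r - 1))"],
        rule exI[of _ "\<lambda>j. response_povm (and_response j)"], rule exI[of _ and_x_coeff],
        rule exI[of _ and_m_coeff], rule exI[of _ and_flip])
      (use density correlator povm2_response_povm in auto)
qed

end
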